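(* Let $\alpha\in(0,\pi]$ and $x,y\in S_\alpha$ with $|y|\le|x|$. Then \[ k_{S_\alpha}(x,y)\ge\frac{1}{\sin\frac{\alpha}{2}}\log\frac{|x|}{|y|}. \]
   Context: $S_\alpha=\{\rho e^{it}:\rho>0,\ t\in(0,\alpha)\}\subset\mathbb{C}$. For a domain $G\subsetneq\mathbb{R}^2$, $k_G(x,y)=\inf_\gamma\int_\gamma\frac{|dz|}{d(z,\partial G)}$, the infimum over rectifiable curves $\gamma\subset G$ joining $x$ and $y$ (quasihyperbolic distance). *)

theory Defs
  imports "HOL-Analysis.Analysis"
begin

definition sector :: "real \<Rightarrow> complex set" where
  "sector \<alpha> = {z. \<exists>\<rho>>0. \<exists>t. 0 < t \<and> t < \<alpha> \<and> z = rcis \<rho> t}"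

definition variation :: "(real \<Rightarrow> 'a::metric_space) \<Rightarrow> real \<Rightarrow> real \<Rightarrow> ennreal" where
  "variation g a b = (SUP ts \<in> {ts. ts \<noteq> [] \<and> sorted ts \<and> hd ts = a \<and> last ts = b}.
      ennreal (\<Sum>i<length ts - 1. dist (g (ts ! i)) (g (ts ! Suc i))))"

definition rectifiable_path :: "(real \<Rightarrow> 'a::metric_space) \<Rightarrow> bool" where
  "rectifiable_path g \<longleftrightarrow> path g \<and> variation g 0 1 < \<infinity>"

definition arclen :: "(real \<Rightarrow> 'a::metric_space) \<Rightarrow> real \<Rightarrow> real" where
  "arclen g t = enn2real (variation g 0 (min 1 (max 0 t)))"

text \<open>Line integral int_g f |dz| (Lebesgue-Stieltjes integral with respect to arc length).\<close>
definition arclength_integral :: "(real \<Rightarrow> 'a::metric_space) \<Rightarrow> ('a \<Rightarrow> real) \<Rightarrow> ennreal" where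
  "arclength_integral g f =
     (\<integral>\<^sup>+ t. ennreal (f (g t)) * indicator {0..1} t \<partial>(interval_measure (arclen g)))"

definition qh_dist :: "'a::euclidean_space set \<Rightarrow> 'a \<Rightarrow> 'a \<Rightarrow> ennreal" where
  "qh_dist G x y =
     (INF g \<in> {g. rectifiable_path g \<and> path_image g \<subseteq> G \<and> pathstart g = x \<and> pathfinish g = y}.
        arclength_integral g (\<lambda>z. 1 / infdist z (frontier G)))"

end

theory Submission
  imports Defs
begin

text \<open>Every point \<open>z\<close> of \<open>S\<^sub>\<alpha>\<close> lies within \<open>|z| sin(\<alpha>/2)\<close> of one of the two boundary rays, so
  the quasihyperbolic density satisfies \<open>1/d(z,\<partial>S\<^sub>\<alpha>) \<ge> 1/(|z| sin(\<alpha>/2))\<close>, and it remains to see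
  that \<open>\<integral>\<^sub>\<gamma> |dz|/|z| \<ge> log(|x|/|y|)\<close> along any rectifiable curve \<open>\<gamma>\<close> from \<open>x\<close> to \<open>y\<close>.
  For this the integral is bounded below by a lower sum over a fine uniform partition
  \<open>t\<^sub>0 < \<dots> < t\<^sub>N\<close>: arc length dominates the chord \<open>|\<gamma>(t\<^sub>i) - \<gamma>(t\<^sub>i\<^sub>+\<^sub>1)| \<ge> |\<gamma>(t\<^sub>i)| - |\<gamma>(t\<^sub>i\<^sub>+\<^sub>1)|\<close>, and
  \<open>log u - log v \<le> (u - v)/v\<close> telescopes to \<open>log(|x|/|y|)\<close>, up to a factor \<open>r/(r+\<delta>)\<close> with
  \<open>r = min |\<gamma>|\<close> and \<open>\<delta>\<close> the oscillation of \<open>|\<gamma>|\<close> on a piece; this factor tends to 1.\<close>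

lemma rcis_in_sector: "0 < \<rho> \<Longrightarrow> 0 < t \<Longrightarrow> t < \<alpha> \<Longrightarrow> rcis \<rho> t \<in> sector \<alpha>"
  unfolding sector_def by blast

lemma sector_iff:
  assumes "0 < \<alpha>" "\<alpha> \<le> pi"
  shows "z \<in> sector \<alpha> \<longleftrightarrow> 0 < Im z \<and> Im (z * cis (-\<alpha>)) < 0"
proof
  assume "z \<in> sector \<alpha>"
  then obtain \<rho> t where r: "\<rho> > 0" "0 < t" "t < \<alpha>" "z = rcis \<rho> t"
    unfolding sector_def by blast
  have "sin t > 0" "sin (\<alpha> - t) > 0" using r assms by (auto intro: sin_gt_zero)
  moreover have "z * cis (-\<alpha>) = rcis \<rho> (t - \<alpha>)" using r by (simp add: rcis_def cis_mult)
  ultimately show "0 < Im z \<and> Im (z * cis (-\<alpha>)) < 0"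
    using r sin_minus[of "\<alpha> - t"] by (simp add: mult_pos_neg)
next
  assume h: "0 < Im z \<and> Im (z * cis (-\<alpha>)) < 0"
  define \<theta> where "\<theta> = Arg z"
  have z0: "z \<noteq> 0" using h by auto
  have zr: "z = rcis (cmod z) \<theta>" unfolding \<theta>_def by (simp add: rcis_cmod_Arg)
  have th: "0 < \<theta>" "\<theta> < pi" using Arg_lt_pi h \<theta>_def by auto
  have "z * cis (-\<alpha>) = rcis (cmod z) (\<theta> - \<alpha>)" by (subst zr) (simp add: rcis_def cis_mult)
  hence "sin (\<theta> - \<alpha>) < 0" using h z0 by (simp add: mult_less_0_iff)
  hence "\<theta> < \<alpha>" using th assms sin_ge_zero[of "\<theta> - \<alpha>"] by force
  thus "z \<in> sector \<alpha>" using zr th z0 rcis_in_sector[of "cmod z" \<theta> \<alpha>] by simp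
qed

lemma zero_notin_sector: "0 < \<alpha> \<Longrightarrow> \<alpha> \<le> pi \<Longrightarrow> 0 \<notin> sector \<alpha>"
  by (simp add: sector_iff)

lemma open_sector:
  assumes "0 < \<alpha>" "\<alpha> \<le> pi"
  shows "open (sector \<alpha>)"
proof -
  have "sector \<alpha> = {z. 0 < Im z} \<inter> {z. Im (z * cis (-\<alpha>)) < 0}"
    using sector_iff[OF assms] by auto
  thus ?thesis by (auto intro!: open_Int open_Collect_less continuous_intros)
qed

lemma frontier_sector_if_limit:
  assumes "0 < \<alpha>" "\<alpha> \<le> pi" and "p \<notin> sector \<alpha>"
    and lim: "(f \<longlongrightarrow> p) (at_right (0::real))"
    and in_sector: "\<And>s. 0 < s \<Longrightarrow> s < \<alpha> \<Longrightarrow> f s \<in> sector \<alpha>"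
  shows "p \<in> frontier (sector \<alpha>)"
proof -
  have "eventually (\<lambda>s. f s \<in> closure (sector \<alpha>)) (at_right (0::real))"
    unfolding eventually_at_right_field using assms(1) in_sector closure_subset by blast
  hence "p \<in> closure (sector \<alpha>)"
    using Lim_in_closed_set[OF closed_closure _ _ lim] by simp
  thus ?thesis using assms(3) open_sector[OF assms(1,2)] by (simp add: frontier_def interior_open)
qed

lemma of_real_in_frontier_sector:
  assumes "0 < \<alpha>" "\<alpha> \<le> pi" "0 \<le> q"
  shows "complex_of_real q \<in> frontier (sector \<alpha>)"
proof (rule frontier_sector_if_limit[OF assms(1,2), where f = "\<lambda>s. rcis (q + s) s"])
  show "complex_of_real q \<notin> sector \<alpha>" using sector_iff[OF assms(1,2)] by simp
  have "((\<lambda>s. rcis (q + s) s) \<longlongrightarrow> rcis (q + 0) 0) (at_right 0)"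
    unfolding rcis_def by (intro tendsto_intros)
  thus "((\<lambda>s. rcis (q + s) s) \<longlongrightarrow> complex_of_real q) (at_right 0)" by simp
qed (use assms in \<open>auto intro: rcis_in_sector\<close>)

lemma rcis_in_frontier_sector:
  assumes "0 < \<alpha>" "\<alpha> \<le> pi" "0 \<le> q"
  shows "rcis q \<alpha> \<in> frontier (sector \<alpha>)"
proof (rule frontier_sector_if_limit[OF assms(1,2), where f = "\<lambda>s. rcis (q + s) (\<alpha> - s)"])
  have "rcis q \<alpha> * cis (-\<alpha>) = complex_of_real q" by (simp add: rcis_def cis_mult)
  thus "rcis q \<alpha> \<notin> sector \<alpha>" using sector_iff[OF assms(1,2), of "rcis q \<alpha>"] by simp
  have "((\<lambda>s. rcis (q + s) (\<alpha> - s)) \<longlongrightarrow> rcis (q + 0) (\<alpha> - 0)) (at_right 0)"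
    unfolding rcis_def by (intro tendsto_intros)
  thus "((\<lambda>s. rcis (q + s) (\<alpha> - s)) \<longlongrightarrow> rcis q \<alpha>) (at_right 0)" by simp
qed (use assms in \<open>auto intro: rcis_in_sector\<close>)

lemma dist_rcis_of_real_cos:
  assumes "0 \<le> \<rho>"
  shows "dist (rcis \<rho> t) (complex_of_real (\<rho> * cos t)) = \<rho> * \<bar>sin t\<bar>"
proof -
  have "rcis \<rho> t - complex_of_real (\<rho> * cos t) = \<i> * complex_of_real (\<rho> * sin t)"
    by (simp add: complex_eq_iff)
  thus ?thesis using \<open>0 \<le> \<rho>\<close> by (simp add: dist_norm norm_mult abs_mult)
qed

lemma dist_rcis_rotate:
  "dist (rcis \<rho> t) (rcis q \<alpha>) = dist (rcis \<rho> (t - \<alpha>)) (complex_of_real q)"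
proof -
  have "(rcis \<rho> t - rcis q \<alpha>) * cis (-\<alpha>)
      = of_real \<rho> * (cis t * cis (-\<alpha>)) - of_real q * (cis \<alpha> * cis (-\<alpha>))"
    by (simp add: rcis_def algebra_simps)
  also have "\<dots> = rcis \<rho> (t - \<alpha>) - complex_of_real q" by (simp add: rcis_def cis_mult)
  finally have "(rcis \<rho> t - rcis q \<alpha>) * cis (-\<alpha>) = rcis \<rho> (t - \<alpha>) - complex_of_real q" .
  hence "cmod (rcis \<rho> t - rcis q \<alpha>) = cmod (rcis \<rho> (t - \<alpha>) - complex_of_real q)"
    by (metis norm_cis mult.right_neutral norm_mult)
  thus ?thesis by (simp add: dist_norm)
qed

lemma infdist_frontier_sector_le:
  assumes a: "0 < \<alpha>" "\<alpha> \<le> pi" and "z \<in> sector \<alpha>"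
  shows "infdist z (frontier (sector \<alpha>)) \<le> cmod z * sin (\<alpha> / 2)"
proof -
  obtain \<rho> t where r: "\<rho> > 0" "0 < t" "t < \<alpha>" and z: "z = rcis \<rho> t"
    using assms(3) unfolding sector_def by blast
  \<comment> \<open>Drop a perpendicular onto the nearer boundary ray, at angle \<open>min t (\<alpha> - t) \<le> \<alpha> / 2\<close>.\<close>
  consider "t \<le> \<alpha> / 2" | "\<alpha> - t \<le> \<alpha> / 2" by linarith
  then show ?thesis
  proof cases
    case 1
    have "cos t \<ge> 0" using 1 a r by (intro cos_ge_zero) auto
    hence "infdist z (frontier (sector \<alpha>)) \<le> dist z (complex_of_real (\<rho> * cos t))"
      using of_real_in_frontier_sector[OF a, of "\<rho> * cos t"] r by (intro infdist_le) auto
    also have "\<dots> = \<rho> * sin t"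
      using dist_rcis_of_real_cos[of \<rho> t] sin_gt_zero[of t] r a by (simp add: z)
    also have "\<dots> \<le> \<rho> * sin (\<alpha> / 2)" using 1 a r by (intro mult_left_mono sin_monotone_2pi_le) auto
    finally show ?thesis using r by (simp add: z)
  next
    case 2
    have "cos (\<alpha> - t) \<ge> 0" using 2 a r by (intro cos_ge_zero) auto
    hence "infdist z (frontier (sector \<alpha>)) \<le> dist z (rcis (\<rho> * cos (\<alpha> - t)) \<alpha>)"
      using rcis_in_frontier_sector[OF a] r by (intro infdist_le) auto
    also have "\<dots> = \<rho> * sin (\<alpha> - t)"
      using dist_rcis_of_real_cos[of \<rho> "t - \<alpha>"] sin_gt_zero[of "\<alpha> - t"]
        sin_minus[of "\<alpha> - t"] cos_minus[of "\<alpha> - t"] r a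
      by (simp add: z dist_rcis_rotate)
    also have "\<dots> \<le> \<rho> * sin (\<alpha> / 2)" using 2 a r by (intro mult_left_mono sin_monotone_2pi_le) auto
    finally show ?thesis using r by (simp add: z)
  qed
qed

lemma infdist_frontier_sector_pos:
  assumes "0 < \<alpha>" "\<alpha> \<le> pi" and "z \<in> sector \<alpha>"
  shows "0 < infdist z (frontier (sector \<alpha>))"
proof -
  have "z \<notin> frontier (sector \<alpha>)"
    using assms open_sector[OF assms(1,2)] by (simp add: frontier_def interior_open)
  moreover have "frontier (sector \<alpha>) \<noteq> {}"
    using of_real_in_frontier_sector[OF assms(1,2), of 0] by auto
  ultimately show ?thesis by (intro infdist_pos_not_in_closed) auto
qed

lemma inverse_infdist_frontier_sector_ge:
  assumes "0 < \<alpha>" "\<alpha> \<le> pi" "z \<in> sector \<alpha>"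
  shows "1 / (cmod z * sin (\<alpha> / 2)) \<le> 1 / infdist z (frontier (sector \<alpha>))"
  using infdist_frontier_sector_pos[OF assms] infdist_frontier_sector_le[OF assms]
    sin_gt_zero[of "\<alpha> / 2"] assms(1,2)
  by (intro divide_left_mono mult_pos_pos) auto

definition polygon_length :: "(real \<Rightarrow> 'a::metric_space) \<Rightarrow> real list \<Rightarrow> real" where
  "polygon_length g ts = (\<Sum>i<length ts - 1. dist (g (ts ! i)) (g (ts ! Suc i)))"

definition partitions :: "real \<Rightarrow> real \<Rightarrow> real list set" where
  "partitions a b = {ts. ts \<noteq> [] \<and> sorted ts \<and> hd ts = a \<and> last ts = b}"

lemma variation_eq_SUP_polygon_length:
  "variation g a b = (SUP ts \<in> partitions a b. ennreal (polygon_length g ts))"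
  unfolding variation_def polygon_length_def partitions_def by simp

lemma polygon_length_singleton [simp]: "polygon_length g [a] = 0"
  by (simp add: polygon_length_def)

lemma polygon_length_Cons_Cons [simp]:
  "polygon_length g (a # b # ts) = dist (g a) (g b) + polygon_length g (b # ts)"
  unfolding polygon_length_def by (simp add: sum.lessThan_Suc_shift del: sum.lessThan_Suc)

lemma polygon_length_nonneg: "0 \<le> polygon_length g ts"
  unfolding polygon_length_def by (intro sum_nonneg) auto

lemma polygon_length_append:
  "xs \<noteq> [] \<Longrightarrow> polygon_length g (xs @ ys) = polygon_length g xs + polygon_length g (last xs # ys)"
  by (induction xs rule: induct_list012) auto

lemma sorted_le_last: "sorted xs \<Longrightarrow> x \<in> set xs \<Longrightarrow> x \<le> last xs"
  by (induction xs rule: induct_list012) (auto simp: order_trans)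

lemma polygon_length_le_variation:
  "ts \<in> partitions a b \<Longrightarrow> ennreal (polygon_length g ts) \<le> variation g a b"
  unfolding variation_eq_SUP_polygon_length by (rule SUP_upper)

lemma two_point_partition: "a \<le> b \<Longrightarrow> [a, b] \<in> partitions a b"
  by (simp add: partitions_def)

lemma variation_add_polygon_length_le:
  assumes "a \<le> s" and sB: "s # B \<in> partitions s c"
  shows "variation g a s + ennreal (polygon_length g (s # B)) \<le> variation g a c"
proof -
  have "variation g a s + ennreal (polygon_length g (s # B))
      = (SUP ts \<in> partitions a s. ennreal (polygon_length g ts) + ennreal (polygon_length g (s # B)))"
    unfolding variation_eq_SUP_polygon_length
    using two_point_partition[OF assms(1)] by (intro ennreal_SUP_add_left[symmetric]) blast
  also have "\<dots> \<le> variation g a c"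
  proof (rule SUP_least)
    fix ts assume ts: "ts \<in> partitions a s"
    have "\<forall>x\<in>set ts. x \<le> s" using ts sorted_le_last by (auto simp: partitions_def)
    moreover have "\<forall>y\<in>set B. s \<le> y" using sB by (auto simp: partitions_def)
    ultimately have "ts @ B \<in> partitions a c"
      using ts sB by (cases B) (auto simp: partitions_def sorted_append intro: order_trans)
    moreover have "polygon_length g (ts @ B) = polygon_length g ts + polygon_length g (s # B)"
      using ts by (simp add: polygon_length_append partitions_def)
    ultimately show "ennreal (polygon_length g ts) + ennreal (polygon_length g (s # B)) \<le> variation g a c"
      using polygon_length_le_variation[of "ts @ B" a c g]
      by (simp add: ennreal_plus[symmetric] polygon_length_nonneg del: ennreal_plus)
  qed
  finally show ?thesis .
qed

lemma partition_split:
  assumes Q: "Q \<in> partitions a c" and "a \<le> t" "t < c"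
  obtains A b B where "Q = A @ b # B" "A \<noteq> []" "A @ [t] \<in> partitions a t" "t < b"
    "b # B \<in> partitions b c"
proof -
  define A where "A = takeWhile (\<lambda>u. u \<le> t) Q"
  define R where "R = dropWhile (\<lambda>u. u \<le> t) Q"
  have Q': "Q \<noteq> []" "sorted Q" "hd Q = a" "last Q = c" using Q by (auto simp: partitions_def)
  have QAR: "Q = A @ R" by (simp add: A_def R_def)
  have "A \<noteq> []" using Q' \<open>a \<le> t\<close> by (cases Q) (auto simp: A_def)
  have "R \<noteq> []"
  proof
    assume "R = []"
    hence "last Q \<le> t" using last_in_set[OF Q'(1)] by (auto simp: R_def)
    thus False using Q' \<open>t < c\<close> by simp
  qed
  then obtain b B where R: "R = b # B" by (cases R) auto
  have "t < b" using hd_dropWhile[of "\<lambda>u. u \<le> t" Q] \<open>R \<noteq> []\<close> by (simp add: R_def[symmetric] R)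
  have "\<forall>u\<in>set A. u \<le> t" unfolding A_def using set_takeWhileD by fastforce
  hence "A @ [t] \<in> partitions a t"
    using Q' QAR \<open>A \<noteq> []\<close> by (auto simp: partitions_def sorted_append)
  moreover have "b # B \<in> partitions b c" using Q' QAR R by (auto simp: partitions_def sorted_append)
  ultimately show ?thesis using that QAR R \<open>A \<noteq> []\<close> \<open>t < b\<close> by blast
qed

lemma arclen_nonneg: "0 \<le> arclen g t"
  by (simp add: arclen_def)

lemma arclen_clamp: "arclen g (min 1 (max 0 x)) = arclen g x"
  by (simp add: arclen_def)

context
  fixes g :: "real \<Rightarrow> 'a::metric_space"
  assumes finite_length: "variation g 0 1 < \<infinity>"
begin

lemma variation_eq_arclen:
  assumes "0 \<le> u" "u \<le> 1"
  shows "variation g 0 u = ennreal (arclen g u)"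
proof -
  have "variation g 0 u \<le> variation g 0 u + ennreal (polygon_length g [u, 1])" by simp
  also have "\<dots> \<le> variation g 0 1"
    using assms by (intro variation_add_polygon_length_le) (simp_all add: partitions_def)
  finally have "variation g 0 u < \<infinity>" using finite_length by simp
  thus ?thesis using assms by (simp add: arclen_def ennreal_enn2real)
qed

lemma polygon_length_le_arclen:
  assumes ts: "ts \<in> partitions 0 u" and "u \<le> 1"
  shows "polygon_length g ts \<le> arclen g u"
proof -
  have "0 \<le> u"
    using ts unfolding partitions_def by (metis (mono_tags) hd_in_set mem_Collect_eq sorted_le_last)
  hence "ennreal (polygon_length g ts) \<le> ennreal (arclen g u)"
    using polygon_length_le_variation[OF ts, of g] variation_eq_arclen \<open>u \<le> 1\<close> by simp
  thus ?thesis by (simp add: arclen_nonneg)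
qed

lemma arclen_add_polygon_length_le:
  assumes "0 \<le> s" and sB: "s # B \<in> partitions s c" and "c \<le> 1"
  shows "arclen g s + polygon_length g (s # B) \<le> arclen g c"
proof -
  have "s \<le> c" using sB sorted_le_last[of "s # B" s] by (simp add: partitions_def)
  have "ennreal (arclen g s + polygon_length g (s # B))
      = variation g 0 s + ennreal (polygon_length g (s # B))"
    using assms \<open>s \<le> c\<close>
    by (simp add: ennreal_plus arclen_nonneg polygon_length_nonneg variation_eq_arclen)
  also have "\<dots> \<le> variation g 0 c" by (rule variation_add_polygon_length_le[OF assms(1) sB])
  also have "\<dots> = ennreal (arclen g c)" using assms \<open>s \<le> c\<close> by (simp add: variation_eq_arclen)
  finally show ?thesis by (simp add: arclen_nonneg)
qed

lemma dist_le_arclen_diff: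
  assumes "0 \<le> a" "a \<le> b" "b \<le> 1"
  shows "dist (g a) (g b) \<le> arclen g b - arclen g a"
  using arclen_add_polygon_length_le[of a "[b]" b] assms by (simp add: partitions_def)

lemma arclen_mono: "x \<le> y \<Longrightarrow> arclen g x \<le> arclen g y"
  using dist_le_arclen_diff[of "min 1 (max 0 x)" "min 1 (max 0 y)"]
    zero_le_dist[of "g (min 1 (max 0 x))" "g (min 1 (max 0 y))"]
  by (simp only: arclen_clamp) linarith

lemma polygon_length_approximates_arclen:
  assumes "0 < e"
  obtains Q where "Q \<in> partitions 0 1" "arclen g 1 - e < polygon_length g Q"
proof (cases "arclen g 1 < e")
  case True
  hence "arclen g 1 - e < polygon_length g [0, 1]" using polygon_length_nonneg[of g "[0, 1]"] by linarith
  thus ?thesis using that[OF two_point_partition[of 0 1]] by simp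
next
  case False
  hence "ennreal (arclen g 1 - e) < variation g 0 1"
    using assms variation_eq_arclen[of 1] by (simp add: ennreal_lessI)
  then obtain Q where "Q \<in> partitions 0 1" "ennreal (arclen g 1 - e) < ennreal (polygon_length g Q)"
    unfolding variation_eq_SUP_polygon_length less_SUP_iff by blast
  thus ?thesis using that False by (simp add: ennreal_less_iff)
qed

text \<open>Insert a point \<open>s\<close> close to \<open>t\<close> into a partition whose polygon is almost as long as
  \<open>g\<close>: the chord from \<open>g t\<close> to \<open>g s\<close> is short, so little length can lie in \<open>[t, s]\<close>.\<close>

lemma arclen_right_approx:
  assumes "path g" "0 \<le> t" "t < 1" "0 < e"
  obtains s where "t < s" "s \<le> 1" "arclen g s \<le> arclen g t + e"
proof -
  obtain Q where Q: "Q \<in> partitions 0 1" and Qe: "arclen g 1 - e / 2 < polygon_length g Q"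
    using polygon_length_approximates_arclen[of "e / 2"] assms by auto
  obtain A b B where QAB: "Q = A @ b # B" "A \<noteq> []" and A: "A @ [t] \<in> partitions 0 t"
    and "t < b" and B: "b # B \<in> partitions b 1"
    using partition_split[OF Q] assms by blast
  have "b \<le> 1" using B sorted_le_last[of "b # B" b] by (simp add: partitions_def)
  have "continuous_on {0..1} g" using \<open>path g\<close> by (simp add: path_def)
  then obtain d where "d > 0" and d: "\<forall>s\<in>{0..1}. dist s t < d \<longrightarrow> dist (g s) (g t) < e / 2"
    using assms unfolding continuous_on_iff by (metis atLeastAtMost_iff half_gt_zero less_eq_real_def)
  define s where "s = min (t + d / 2) ((t + b) / 2)"
  have s: "t < s" "s < b" "s \<le> 1" using \<open>d > 0\<close> \<open>t < b\<close> \<open>b \<le> 1\<close> by (auto simp: s_def min_def)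
  have "\<bar>s - t\<bar> < d" using s \<open>d > 0\<close> by (auto simp: s_def min_def)
  hence "dist (g t) (g s) < e / 2"
    using d s assms by (auto simp: dist_real_def dist_commute)
  have "polygon_length g Q = polygon_length g A + dist (g (last A)) (g b) + polygon_length g (b # B)"
    using QAB by (simp add: polygon_length_append)
  moreover have "polygon_length g A + dist (g (last A)) (g t) \<le> arclen g t"
    using polygon_length_le_arclen[OF A] QAB assms by (simp add: polygon_length_append)
  moreover have "arclen g s + dist (g s) (g b) + polygon_length g (b # B) \<le> arclen g 1"
    using arclen_add_polygon_length_le[of s "b # B" 1] B s assms
    by (force simp: partitions_def intro: order_trans)
  moreover have "dist (g (last A)) (g b) \<le> dist (g (last A)) (g t) + dist (g t) (g s) + dist (g s) (g b)"
    using dist_triangle[of "g (last A)" "g b" "g t"] dist_triangle[of "g t" "g b" "g s"] by linarith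
  ultimately show ?thesis using that s Qe \<open>dist (g t) (g s) < e / 2\<close> by fastforce
qed

lemma arclen_continuous_at_right:
  assumes "path g"
  shows "continuous (at_right a) (arclen g)"
proof (rule iffD2[OF continuous_at_right_real_increasing], rule arclen_mono, assumption, intro allI impI)
  fix e :: real assume "0 < e"
  consider "a < 0" | "0 \<le> a" "a < 1" | "1 \<le> a" by linarith
  then show "\<exists>d>0. arclen g (a + d) - arclen g a < e"
  proof cases
    case 1
    hence "arclen g (a + - a / 2) = arclen g a" by (simp add: arclen_def)
    thus ?thesis using 1 \<open>0 < e\<close> by (intro exI[of _ "- a / 2"]) auto
  next
    case 2
    obtain s where "a < s" "s \<le> 1" "arclen g s \<le> arclen g a + e / 2"
      using arclen_right_approx[OF assms 2, of "e / 2"] \<open>0 < e\<close> by auto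
    thus ?thesis using \<open>0 < e\<close> by (intro exI[of _ "s - a"]) auto
  next
    case 3
    hence "arclen g (a + 1) = arclen g a" by (simp add: arclen_def)
    thus ?thesis using \<open>0 < e\<close> by (intro exI[of _ 1]) auto
  qed
qed

lemma emeasure_interval_measure_arclen:
  assumes "path g" "a \<le> b"
  shows "emeasure (interval_measure (arclen g)) {a<..b} = ennreal (arclen g b - arclen g a)"
  using emeasure_interval_measure_Ioc[OF assms(2) arclen_mono arclen_continuous_at_right[OF assms(1)]]
  by simp

end

lemma arclength_integral_ge_step_sum:
  fixes g :: "real \<Rightarrow> 'a::metric_space" and tt :: "nat \<Rightarrow> real"
  assumes g: "path g" "variation g 0 1 < \<infinity>"
    and tt: "mono tt" "0 \<le> tt 0" "tt N \<le> 1"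
    and c_nonneg: "\<And>i. i < N \<Longrightarrow> 0 \<le> c i"
    and c_le: "\<And>i t. i < N \<Longrightarrow> t \<in> {tt i<..tt (Suc i)} \<Longrightarrow> c i \<le> f (g t)"
  shows "ennreal (\<Sum>i<N. c i * dist (g (tt i)) (g (tt (Suc i)))) \<le> arclength_integral g f"
proof -
  define J where "J i = {tt i<..tt (Suc i)}" for i
  define F where "F = arclen g"
  have tt_01: "tt i \<in> {0..1}" if "i \<le> N" for i
    using tt monoD[OF tt(1), of 0 i] monoD[OF tt(1), of i N] that by auto
  have tt_Suc: "tt i \<le> tt (Suc i)" for i using monoD[OF tt(1)] by simp
  have dist_le: "dist (g (tt i)) (g (tt (Suc i))) \<le> F (tt (Suc i)) - F (tt i)" if "i < N" for i
    unfolding F_def using tt_01[of i] tt_01[of "Suc i"] that tt_Suc[of i]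
    by (intro dist_le_arclen_diff[OF g(2)]) auto
  have pointwise: "(\<Sum>i<N. ennreal (c i) * indicator (J i) t) \<le> ennreal (f (g t)) * indicator {0..1} t"
    for t
  proof (cases "\<exists>i<N. t \<in> J i")
    case True
    then obtain i where i: "i < N" "t \<in> J i" by blast
    have sep: "tt (Suc k) \<le> tt l" if "k < l" for k l using monoD[OF tt(1)] that by simp
    have "j = i" if "t \<in> J j" for j
    proof (rule ccontr)
      assume "j \<noteq> i"
      have "tt i < t" "t \<le> tt (Suc i)" "tt j < t" "t \<le> tt (Suc j)"
        using i(2) \<open>t \<in> J j\<close> by (simp_all add: J_def)
      thus False
        using sep[of j i] sep[of i j] \<open>j \<noteq> i\<close> by (meson linorder_neqE_nat order.trans not_le)
    qed
    hence "(\<Sum>j\<in>{..<N} - {i}. ennreal (c j) * indicator (J j) t) = 0"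
      by (intro sum.neutral) (auto simp: indicator_def)
    hence "(\<Sum>j<N. ennreal (c j) * indicator (J j) t) = ennreal (c i)"
      using i sum.remove[of "{..<N}" i "\<lambda>j. ennreal (c j) * indicator (J j) t"] by simp
    moreover have "t \<in> {0..1}" using i tt_01[of i] tt_01[of "Suc i"] by (auto simp: J_def)
    moreover have "c i \<le> f (g t)" using c_le i by (simp add: J_def)
    ultimately show ?thesis by (simp add: ennreal_leI)
  next
    case False
    hence "(\<Sum>j<N. ennreal (c j) * indicator (J j) t) = 0" by (intro sum.neutral) auto
    thus ?thesis by simp
  qed
  have "ennreal (\<Sum>i<N. c i * dist (g (tt i)) (g (tt (Suc i))))
      \<le> ennreal (\<Sum>i<N. c i * (F (tt (Suc i)) - F (tt i)))"
    using dist_le c_nonneg by (intro ennreal_leI sum_mono mult_left_mono) auto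
  also have "\<dots> = (\<Sum>i<N. ennreal (c i) * emeasure (interval_measure F) (J i))"
  proof -
    have "0 \<le> F (tt (Suc i)) - F (tt i)" if "i < N" for i
      using dist_le[OF that] zero_le_dist order_trans by blast
    hence "ennreal (\<Sum>i<N. c i * (F (tt (Suc i)) - F (tt i)))
        = (\<Sum>i<N. ennreal (c i) * ennreal (F (tt (Suc i)) - F (tt i)))"
      using c_nonneg by (subst sum_ennreal[symmetric]) (auto simp: ennreal_mult intro!: sum.cong)
    thus ?thesis
      by (simp add: J_def F_def emeasure_interval_measure_arclen[OF g(2,1)] tt_Suc)
  qed
  also have "\<dots> = (\<Sum>i<N. \<integral>\<^sup>+ t. ennreal (c i) * indicator (J i) t \<partial>interval_measure F)"
    by (simp add: nn_integral_cmult_indicator J_def)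
  also have "\<dots> = (\<integral>\<^sup>+ t. (\<Sum>i<N. ennreal (c i) * indicator (J i) t) \<partial>interval_measure F)"
    by (rule nn_integral_sum[symmetric]) (simp add: J_def)
  also have "\<dots> \<le> arclength_integral g f"
    unfolding arclength_integral_def F_def by (intro nn_integral_mono pointwise)
  finally show ?thesis .
qed

lemma scaled_ln_diff_le:
  fixes r \<delta> u v d :: real
  assumes "0 < r" "0 < \<delta>" "r \<le> u" "r \<le> v" "0 \<le> d" "u - v \<le> d"
  shows "r / (r + \<delta>) * (ln u - ln v) \<le> d / (v + \<delta>)"
proof (cases "u \<le> v")
  case True
  hence "r / (r + \<delta>) * (ln u - ln v) \<le> 0"
    using assms by (intro mult_nonneg_nonpos) auto
  also have "0 \<le> d / (v + \<delta>)" using assms by simp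
  finally show ?thesis .
next
  case False
  have "ln u - ln v \<le> u / v - 1"
    using assms ln_le_minus_one[of "u / v"] by (simp add: ln_div)
  also have "\<dots> = (u - v) / v" using assms by (simp add: field_simps)
  finally have "r / (r + \<delta>) * (ln u - ln v) \<le> r / (r + \<delta>) * ((u - v) / v)"
    using assms by (intro mult_left_mono) auto
  also have "\<dots> = (u - v) * (r / ((r + \<delta>) * v))" by simp
  also have "\<dots> \<le> (u - v) * (1 / (v + \<delta>))"
  proof (intro mult_left_mono)
    have "r * (v + \<delta>) \<le> (r + \<delta>) * v" using assms by (simp add: algebra_simps mult_right_mono)
    thus "r / ((r + \<delta>) * v) \<le> 1 / (v + \<delta>)" using assms by (simp add: divide_simps)
  qed (use False in auto)
  also have "\<dots> \<le> d / (v + \<delta>)" using assms divide_right_mono[of "u - v" d "v + \<delta>"] by simp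
  finally show ?thesis .
qed

lemma ln_telescope_le:
  fixes a d :: "nat \<Rightarrow> real"
  assumes "0 < r" "0 < \<delta>" "\<And>i. i \<le> N \<Longrightarrow> r \<le> a i"
    and "\<And>i. i < N \<Longrightarrow> 0 \<le> d i" "\<And>i. i < N \<Longrightarrow> a i - a (Suc i) \<le> d i"
  shows "r / (r + \<delta>) * (ln (a 0) - ln (a N)) \<le> (\<Sum>i<N. d i / (a (Suc i) + \<delta>))"
proof -
  have "r / (r + \<delta>) * (ln (a 0) - ln (a N)) = (\<Sum>i<N. r / (r + \<delta>) * (ln (a i) - ln (a (Suc i))))"
    by (simp only: sum_distrib_left[symmetric] sum_lessThan_telescope'[of "\<lambda>i. ln (a i)" N])
  also have "\<dots> \<le> (\<Sum>i<N. d i / (a (Suc i) + \<delta>))"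
    by (intro sum_mono scaled_ln_diff_le) (use assms in auto)
  finally show ?thesis .
qed

lemma ennreal_le_if_scaled_le:
  assumes "\<And>\<kappa>. 0 < \<kappa> \<Longrightarrow> \<kappa> < 1 \<Longrightarrow> ennreal (\<kappa> * a) \<le> X"
  shows "ennreal a \<le> X"
proof (cases X)
  case (real x)
  have "\<kappa> * a \<le> x" if "0 < \<kappa>" "\<kappa> < 1" for \<kappa>
    using assms[OF that] real by simp
  hence "a \<le> x" by (rule field_le_mult_one_interval)
  thus ?thesis using real by (simp add: ennreal_leI)
qed simp

lemma uniform_partition_small_oscillation:
  fixes f :: "real \<Rightarrow> real"
  assumes "continuous_on {0..1} f" "0 < \<delta>"
  obtains N :: nat where "0 < N"
    "\<And>i t. i < N \<Longrightarrow> t \<in> {real i / N<..real (Suc i) / N} \<Longrightarrow>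
      f t < f (real (Suc i) / N) + \<delta>"
proof -
  obtain d where "0 < d"
    and d: "\<And>t t'. t \<in> {0..1} \<Longrightarrow> t' \<in> {0..1} \<Longrightarrow> dist t' t < d \<Longrightarrow> dist (f t') (f t) < \<delta>"
    using compact_uniformly_continuous[OF assms(1) compact_Icc] assms(2)
    unfolding uniformly_continuous_on_def by metis
  obtain N :: nat where "0 < N" "inverse (real N) < d"
    using ex_inverse_of_nat_less[OF \<open>0 < d\<close>] by blast
  have "f t < f (real (Suc i) / N) + \<delta>" if "i < N" "t \<in> {real i / N<..real (Suc i) / N}" for i t
  proof -
    have "real (Suc i) / N - real i / N = inverse (real N)" by (simp add: divide_inverse algebra_simps)
    hence "dist t (real (Suc i) / N) < d" using that \<open>inverse (real N) < d\<close> by (auto simp: dist_real_def)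
    moreover have "0 \<le> real i / N" "real (Suc i) / N \<le> 1" using that by (auto simp: field_simps)
    hence "t \<in> {0..1}" "real (Suc i) / N \<in> {0..1}"
      using that unfolding atLeastAtMost_iff greaterThanAtMost_iff by linarith+
    ultimately have "dist (f t) (f (real (Suc i) / N)) < \<delta>"
      using d[of "real (Suc i) / N" t] by blast
    thus ?thesis by (simp add: dist_real_def)
  qed
  thus ?thesis using that \<open>0 < N\<close> by blast
qed

lemma arclength_integral_sector_ge:
  fixes g :: "real \<Rightarrow> complex"
  assumes \<alpha>: "0 < \<alpha>" "\<alpha> \<le> pi" and g: "path g" "variation g 0 1 < \<infinity>" "path_image g \<subseteq> sector \<alpha>"
    and \<kappa>: "0 < \<kappa>" "\<kappa> < 1"
  shows "ennreal (\<kappa> * (1 / sin (\<alpha> / 2) * ln (cmod (g 0) / cmod (g 1))))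
    \<le> arclength_integral g (\<lambda>z. 1 / infdist z (frontier (sector \<alpha>)))"
proof -
  define c0 where "c0 = 1 / sin (\<alpha> / 2)"
  have "0 < c0" using \<alpha> by (simp add: c0_def sin_gt_zero)
  have in_sector: "g t \<in> sector \<alpha>" if "t \<in> {0..1}" for t
    using g(3) that by (auto simp: path_image_def)
  have cont: "continuous_on {0..1} (\<lambda>t. cmod (g t))"
    using g(1) by (auto simp: path_def intro!: continuous_intros)
  obtain t0 where "t0 \<in> {0..1}" and t0: "\<And>t. t \<in> {0..1} \<Longrightarrow> cmod (g t0) \<le> cmod (g t)"
    using continuous_attains_inf[OF compact_Icc _ cont] by auto
  define r where "r = cmod (g t0)"
  have "0 < r" using zero_notin_sector[OF \<alpha>] in_sector[OF \<open>t0 \<in> {0..1}\<close>] by (auto simp: r_def)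
  \<comment> \<open>\<open>\<delta>\<close> bounds the oscillation of \<open>|g|\<close> on each piece and is chosen so that \<open>r / (r + \<delta>) = \<kappa>\<close>.\<close>
  define \<delta> where "\<delta> = r * (1 - \<kappa>) / \<kappa>"
  have "0 < \<delta>" using \<open>0 < r\<close> \<kappa> by (simp add: \<delta>_def)
  have "r + \<delta> = r / \<kappa>" using \<kappa> by (simp add: \<delta>_def field_simps)
  hence \<kappa>_eq: "r / (r + \<delta>) = \<kappa>" using \<open>0 < r\<close> \<kappa> by simp
  obtain N :: nat where "0 < N"
    and osc: "\<And>i t. i < N \<Longrightarrow> t \<in> {real i / N<..real (Suc i) / N} \<Longrightarrow>
      cmod (g t) < cmod (g (real (Suc i) / N)) + \<delta>"
    using uniform_partition_small_oscillation[OF cont \<open>0 < \<delta>\<close>] by blast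
  define tt where "tt i = real i / real N" for i
  define a where "a i = cmod (g (tt i))" for i
  define c where "c i = c0 / (a (Suc i) + \<delta>)" for i
  have tt_01: "tt i \<in> {0..1}" if "i \<le> N" for i
    using that \<open>0 < N\<close> by (auto simp: tt_def field_simps)
  have "mono tt" by (auto simp: mono_def tt_def divide_right_mono)
  have c_le: "c i \<le> 1 / infdist (g t) (frontier (sector \<alpha>))"
    if "i < N" "t \<in> {tt i<..tt (Suc i)}" for i t
  proof -
    have "t \<in> {0..1}" using that tt_01[of i] tt_01[of "Suc i"] by auto
    have "cmod (g t) < a (Suc i) + \<delta>" using osc that by (simp add: a_def tt_def)
    moreover have "0 < cmod (g t)" using zero_notin_sector[OF \<alpha>] in_sector[OF \<open>t \<in> {0..1}\<close>] by auto
    ultimately have "c i \<le> c0 / cmod (g t)"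
      unfolding c_def using \<open>0 < c0\<close> by (intro divide_left_mono mult_pos_pos) linarith+
    also have "\<dots> \<le> 1 / infdist (g t) (frontier (sector \<alpha>))"
      using inverse_infdist_frontier_sector_ge[OF \<alpha> in_sector[OF \<open>t \<in> {0..1}\<close>]]
      by (simp add: c0_def mult.commute)
    finally show ?thesis .
  qed
  have "0 < cmod (g 0)" "0 < cmod (g 1)" using zero_notin_sector[OF \<alpha>] in_sector[of 0] in_sector[of 1] by auto
  hence "\<kappa> * (c0 * ln (cmod (g 0) / cmod (g 1))) = c0 * (r / (r + \<delta>) * (ln (a 0) - ln (a N)))"
    using \<open>0 < N\<close> by (simp add: \<kappa>_eq ln_div a_def tt_def)
  also have "\<dots> \<le> c0 * (\<Sum>i<N. dist (g (tt i)) (g (tt (Suc i))) / (a (Suc i) + \<delta>))"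
    using \<open>0 < r\<close> \<open>0 < \<delta>\<close> t0 tt_01 norm_triangle_ineq2 \<open>0 < c0\<close>
    by (intro mult_left_mono ln_telescope_le) (auto simp: a_def r_def dist_norm)
  also have "\<dots> = (\<Sum>i<N. c i * dist (g (tt i)) (g (tt (Suc i))))"
    by (simp add: c_def sum_distrib_left)
  finally have "ennreal (\<kappa> * (c0 * ln (cmod (g 0) / cmod (g 1))))
      \<le> ennreal (\<Sum>i<N. c i * dist (g (tt i)) (g (tt (Suc i))))"
    by (rule ennreal_leI)
  also have "\<dots> \<le> arclength_integral g (\<lambda>z. 1 / infdist z (frontier (sector \<alpha>)))"
    using tt_01[of 0] tt_01[of N] \<open>0 < c0\<close> \<open>0 < \<delta>\<close> c_le
    by (intro arclength_integral_ge_step_sum[OF g(1,2) \<open>mono tt\<close>]) (auto simp: c_def a_def)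
  finally show ?thesis by (simp add: c0_def)
qed

theorem lemma5p3:
  fixes \<alpha> :: real and x y :: complex
  assumes "0 < \<alpha>" and "\<alpha> \<le> pi"
    and "x \<in> sector \<alpha>" and "y \<in> sector \<alpha>"
    and "norm y \<le> norm x"
  shows "ennreal ((1 / sin (\<alpha> / 2)) * ln (norm x / norm y)) \<le> qh_dist (sector \<alpha>) x y"
  unfolding qh_dist_def
proof (rule INF_greatest)
  fix g assume "g \<in> {g. rectifiable_path g \<and> path_image g \<subseteq> sector \<alpha> \<and> pathstart g = x \<and> pathfinish g = y}"
  hence g: "path g" "variation g 0 1 < \<infinity>" "path_image g \<subseteq> sector \<alpha>" "g 0 = x" "g 1 = y"
    by (auto simp: rectifiable_path_def pathstart_def pathfinish_def)
  show "ennreal ((1 / sin (\<alpha> / 2)) * ln (norm x / norm y))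
    \<le> arclength_integral g (\<lambda>z. 1 / infdist z (frontier (sector \<alpha>)))"
  proof (rule ennreal_le_if_scaled_le)
    fix \<kappa> :: real assume "0 < \<kappa>" "\<kappa> < 1"
    from arclength_integral_sector_ge[OF assms(1,2) g(1-3) this]
    show "ennreal (\<kappa> * (1 / sin (\<alpha> / 2) * ln (norm x / norm y)))
      \<le> arclength_integral g (\<lambda>z. 1 / infdist z (frontier (sector \<alpha>)))"
      by (simp only: g(4,5))
  qed
qed

end
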